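(* Consider the linear model $y=\mathbf{x}\beta_o+\varepsilon$, where $\mathbf{x}$ is a random $1\times p$ row vector with $\mathbb{E}[\mathbf{x}]=0$ and $\beta_o\in\mathbb{R}^p$ is nonrandom. Assume (i) $\mathbb{E}[\varepsilon\mid\mathbf{x}]=0$ a.s.; (ii) there exist constants $B>0$, $d>2$ such that, uniformly in $n$, $\mathbb{E}[|\varepsilon|^d\mid\mathbf{x}]\le B$ a.s., $\mathbb{E}[|\mathbf{x}\tau|^d]\le B$ and $B^{-1}\le\mathbb{E}[|\mathbf{x}\tau|^2]$ for all $\tau\in\mathcal{S}_p$. Then (a) the minimiser of $Q_o(m\delta)$ over $m\in\mathcal{M}_k$, $\delta\in\Delta$ solves the weighted clustering problem $\min_{m\in\mathcal{M}_k,\delta\in\Delta}\|m\delta-\beta_o\|^2_{\mathbb{E}[\mathbf{x}'\mathbf{x}]}$; and (b) $\|b_k\|^2\asymp\min_{m\in\mathcal{M}_k,\delta\in\Delta}\|m\delta-\beta_o\|^2_{\mathbb{E}[\mathbf{x}'\mathbf{x}]}$.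
   Context: $\|\cdot\|$ is the Euclidean norm; $\mathcal{S}_p=\{\tau\in\mathbb{R}^p:\|\tau\|=1\}$; for a positive definite $W$, $\|v\|_W^2:=v'Wv$. $\mathcal{M}_k$ ($1\le k\le p$) is the set of $p\times k$ binary matrices each of whose rows has exactly one entry $1$ (group assignment of the $p$ coordinates; column sums are group sizes), with standing condition that group sizes for every $m\in\mathcal{M}_k$ are bounded above by a constant $M$ and away from zero uniformly in $p$. $\Delta\subset\mathbb{R}^k$. $(m_o,\delta_o)$ minimises the unweighted $\|m\delta-\beta_o\|^2$ over $m\in\mathcal{M}_k,\delta\in\Delta$ and $b_k:=\beta_o-m_o\delta_o$. $Q_o(m\delta):=\mathbb{E}[(y-\mathbf{x}m\delta)^2]/p$. For nonnegative sequences, $a\lesssim b$ means $a\le cb$ for some finite $c>0$, and $a\asymp b$ means $a\lesssim b$ and $b\lesssim a$. *)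

theory Defs
  imports "HOL-Probability.Probability"
begin

(* Vectors in R^p are functions nat => real, only indices i < p matter.
   Matrices are functions nat => nat => real. *)

definition sqnorm :: "nat \<Rightarrow> (nat \<Rightarrow> real) \<Rightarrow> real" where
  "sqnorm p v = (\<Sum>i<p. (v i)\<^sup>2)"

definition wsqnorm :: "nat \<Rightarrow> (nat \<Rightarrow> nat \<Rightarrow> real) \<Rightarrow> (nat \<Rightarrow> real) \<Rightarrow> real" where
  "wsqnorm p W v = (\<Sum>i<p. \<Sum>j<p. v i * W i j * v j)"

definition mvec :: "nat \<Rightarrow> (nat \<Rightarrow> nat \<Rightarrow> real) \<Rightarrow> (nat \<Rightarrow> real) \<Rightarrow> (nat \<Rightarrow> real)" where
  "mvec k m \<delta> = (\<lambda>i. \<Sum>j<k. m i j * \<delta> j)"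

definition rowdot :: "nat \<Rightarrow> (nat \<Rightarrow> real) \<Rightarrow> (nat \<Rightarrow> real) \<Rightarrow> real" where
  "rowdot p x t = (\<Sum>i<p. x i * t i)"

definition sphere_p :: "nat \<Rightarrow> (nat \<Rightarrow> real) set" where
  "sphere_p p = {t. sqnorm p t = 1}"

definition Mset :: "nat \<Rightarrow> nat \<Rightarrow> real \<Rightarrow> real \<Rightarrow> (nat \<Rightarrow> nat \<Rightarrow> real) set" where
  "Mset p k Mlo Mhi = {m. (\<forall>i j. m i j = 0 \<or> m i j = 1)
      \<and> (\<forall>i j. (p \<le> i \<or> k \<le> j) \<longrightarrow> m i j = 0)
      \<and> (\<forall>i<p. \<exists>!j. j < k \<and> m i j = 1)
      \<and> (\<forall>j<k. Mlo \<le> (\<Sum>i<p. m i j) \<and> (\<Sum>i<p. m i j) \<le> Mhi)}"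

definition gen_sigma :: "'a measure \<Rightarrow> nat \<Rightarrow> ('a \<Rightarrow> nat \<Rightarrow> real) \<Rightarrow> 'a measure" where
  "gen_sigma M p x = vimage_algebra (space M) (\<lambda>\<omega>. restrict (x \<omega>) {..<p}) (PiM {..<p} (\<lambda>_. borel))"

definition Sigma_x :: "'a measure \<Rightarrow> ('a \<Rightarrow> nat \<Rightarrow> real) \<Rightarrow> nat \<Rightarrow> nat \<Rightarrow> real" where
  "Sigma_x M x = (\<lambda>i j. \<integral>\<omega>. x \<omega> i * x \<omega> j \<partial>M)"

definition Qo :: "'a measure \<Rightarrow> nat \<Rightarrow> ('a \<Rightarrow> nat \<Rightarrow> real) \<Rightarrow> ('a \<Rightarrow> real)
    \<Rightarrow> (nat \<Rightarrow> real) \<Rightarrow> (nat \<Rightarrow> real) \<Rightarrow> real" where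
  "Qo M p x \<epsilon> \<beta> v =
     (\<integral>\<omega>. ((rowdot p (x \<omega>) \<beta> + \<epsilon> \<omega>) - rowdot p (x \<omega>) v)\<^sup>2 \<partial>M) / real p"

end

theory Submission
  imports Defs
begin

(* Since E[\<epsilon> | x] = 0, the cross term E[(x u) \<epsilon>] vanishes, so
   Q_o(v) = (\<parallel>v - \<beta>_o\<parallel>\<^sup>2_\<Sigma> + E \<epsilon>\<^sup>2) / p with \<Sigma> = E[x'x]: minimising Q_o is the weighted
   clustering problem. Because t\<^sup>2 \<le> 1 + |t|^d for d \<ge> 2, the moment bounds give
   1/B \<le> \<tau>'\<Sigma>\<tau> \<le> 1 + B on the unit sphere, so the weighted and unweighted objectives are
   uniformly comparable, and hence so are their minima. *)

lemma square_le_one_plus_abs_powr: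
  fixes t d :: real
  assumes "d \<ge> 2"
  shows "t\<^sup>2 \<le> 1 + \<bar>t\<bar> powr d"
proof (cases "\<bar>t\<bar> \<le> 1")
  case True
  then have "t\<^sup>2 \<le> 1" by (metis abs_ge_zero power2_abs power_le_one)
  then show ?thesis using powr_ge_zero[of "\<bar>t\<bar>" d] by linarith
next
  case False
  then have "t\<^sup>2 = \<bar>t\<bar> powr 2" by (simp add: powr_numeral)
  also have "\<dots> \<le> \<bar>t\<bar> powr d" using False assms by (intro powr_mono) auto
  finally show ?thesis by simp
qed

lemma (in prob_space) nn_integral_square_le_of_moment:
  assumes [measurable]: "f \<in> borel_measurable M"
    and "d \<ge> 2" "B \<ge> 0" "(\<integral>\<^sup>+\<omega>. ennreal (\<bar>f \<omega>\<bar> powr d) \<partial>M) \<le> ennreal B"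
  shows "(\<integral>\<^sup>+\<omega>. ennreal ((f \<omega>)\<^sup>2) \<partial>M) \<le> ennreal (1 + B)"
proof -
  have "(\<integral>\<^sup>+\<omega>. ennreal ((f \<omega>)\<^sup>2) \<partial>M) \<le> (\<integral>\<^sup>+\<omega>. ennreal 1 + ennreal (\<bar>f \<omega>\<bar> powr d) \<partial>M)"
    using square_le_one_plus_abs_powr[OF \<open>d \<ge> 2\<close>]
    by (intro nn_integral_mono) (metis ennreal_leI ennreal_plus powr_ge_zero zero_le_one)
  also have "\<dots> = 1 + (\<integral>\<^sup>+\<omega>. ennreal (\<bar>f \<omega>\<bar> powr d) \<partial>M)"
    by (subst nn_integral_add) (auto simp: emeasure_space_1)
  also have "\<dots> \<le> ennreal (1 + B)"
    using assms(4) \<open>B \<ge> 0\<close> by (simp add: ennreal_plus add_left_mono)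
  finally show ?thesis .
qed

lemma (in prob_space) integrable_square_of_moment:
  assumes "f \<in> borel_measurable M"
    and "d \<ge> 2" "B \<ge> 0" "(\<integral>\<^sup>+\<omega>. ennreal (\<bar>f \<omega>\<bar> powr d) \<partial>M) \<le> ennreal B"
  shows "integrable M (\<lambda>\<omega>. (f \<omega>)\<^sup>2)"
proof (rule integrableI_bounded)
  show "(\<lambda>\<omega>. (f \<omega>)\<^sup>2) \<in> borel_measurable M" using assms(1) by measurable
  show "(\<integral>\<^sup>+\<omega>. ennreal (norm ((f \<omega>)\<^sup>2)) \<partial>M) < \<infinity>"
    using nn_integral_square_le_of_moment[OF assms]
    by (simp add: ennreal_less_top le_less_trans infinity_ennreal_def)
qed

lemma integrable_mult_of_square_integrable:
  fixes f g :: "'a \<Rightarrow> real"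
  assumes "integrable M (\<lambda>\<omega>. (f \<omega>)\<^sup>2)" "integrable M (\<lambda>\<omega>. (g \<omega>)\<^sup>2)"
    and [measurable]: "f \<in> borel_measurable M" "g \<in> borel_measurable M"
  shows "integrable M (\<lambda>\<omega>. f \<omega> * g \<omega>)"
proof (rule Bochner_Integration.integrable_bound)
  show "integrable M (\<lambda>\<omega>. (f \<omega>)\<^sup>2 + (g \<omega>)\<^sup>2)" using assms(1,2) by simp
  have "\<bar>a * b\<bar> \<le> a\<^sup>2 + b\<^sup>2" for a b :: real
    using sum_squares_bound[of "\<bar>a\<bar>" "\<bar>b\<bar>"] abs_ge_zero[of "a * b"]
    by (simp only: abs_mult power2_abs)
  then show "AE \<omega> in M. norm (f \<omega> * g \<omega>) \<le> norm ((f \<omega>)\<^sup>2 + (g \<omega>)\<^sup>2)"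
    by simp
qed measurable

lemma sqnorm_nonneg: "0 \<le> sqnorm p v"
  by (simp add: sqnorm_def sum_nonneg)

lemma sqnorm_minus_commute: "sqnorm p (\<lambda>i. u i - v i) = sqnorm p (\<lambda>i. v i - u i)"
  by (simp add: sqnorm_def power2_commute)

lemma sqnorm_eq_0_iff: "sqnorm p u = 0 \<longleftrightarrow> (\<forall>i<p. u i = 0)"
  by (auto simp: sqnorm_def sum_nonneg_eq_0_iff)

lemma wsqnorm_scale: "wsqnorm p W (\<lambda>i. s * u i) = s\<^sup>2 * wsqnorm p W u"
  by (simp add: wsqnorm_def sum_distrib_left power2_eq_square mult_ac)

lemma wsqnorm_bounds_of_sphere:
  assumes "a \<ge> 0"
    and sphere: "\<And>\<tau>. \<tau> \<in> sphere_p p \<Longrightarrow> a \<le> wsqnorm p W \<tau> \<and> wsqnorm p W \<tau> \<le> b"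
  shows "a * sqnorm p u \<le> wsqnorm p W u \<and> wsqnorm p W u \<le> b * sqnorm p u"
proof (cases "sqnorm p u = 0")
  case True
  then have "wsqnorm p W u = 0" by (simp add: sqnorm_eq_0_iff wsqnorm_def)
  with True show ?thesis by simp
next
  case False
  define s where "s = sqrt (sqnorm p u)"
  have "s > 0" "s\<^sup>2 = sqnorm p u"
    using False sqnorm_nonneg[of p u] by (simp_all add: s_def)
  define \<tau> where "\<tau> = (\<lambda>i. u i / s)"
  have "sqnorm p \<tau> = sqnorm p u / s\<^sup>2"
    by (simp add: sqnorm_def \<tau>_def power_divide sum_divide_distrib)
  then have "\<tau> \<in> sphere_p p"
    using \<open>s\<^sup>2 = sqnorm p u\<close> False by (simp add: sphere_p_def)
  moreover have "u = (\<lambda>i. s * \<tau> i)" using \<open>s > 0\<close> by (simp add: \<tau>_def)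
  then have "wsqnorm p W u = sqnorm p u * wsqnorm p W \<tau>"
    using \<open>s\<^sup>2 = sqnorm p u\<close> by (metis wsqnorm_scale)
  ultimately show ?thesis
    using sphere[of \<tau>] sqnorm_nonneg[of p u] by (simp add: mult.commute[of _ "sqnorm p u"] mult_left_mono)
qed

lemma rowdot_measurable[measurable]:
  assumes "\<And>i. i < p \<Longrightarrow> (\<lambda>\<omega>. x \<omega> i) \<in> borel_measurable M"
  shows "(\<lambda>\<omega>. rowdot p (x \<omega>) u) \<in> borel_measurable M"
  unfolding rowdot_def using assms by (intro borel_measurable_sum) auto

lemma rowdot_unit_vector:
  assumes "i < p"
  shows "rowdot p X (\<lambda>j. if j = i then 1 else 0) = X i"
  using assms by (simp add: rowdot_def if_distrib cong: if_cong)

lemma unit_vector_in_sphere_p: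
  assumes "i < p"
  shows "(\<lambda>j. if j = i then 1 else 0) \<in> sphere_p p"
proof -
  have "sqnorm p (\<lambda>j. if j = i then 1 else 0) = (\<Sum>j<p. if j = i then 1 else 0)"
    unfolding sqnorm_def by (intro sum.cong) auto
  then show ?thesis using assms by (simp add: sphere_p_def)
qed

lemma wsqnorm_Sigma_x_eq_integral:
  assumes "\<And>i j. i < p \<Longrightarrow> j < p \<Longrightarrow> integrable M (\<lambda>\<omega>. x \<omega> i * x \<omega> j)"
  shows "integrable M (\<lambda>\<omega>. (rowdot p (x \<omega>) u)\<^sup>2)"
    and "wsqnorm p (Sigma_x M x) u = (\<integral>\<omega>. (rowdot p (x \<omega>) u)\<^sup>2 \<partial>M)"
proof -
  have expand: "(\<lambda>\<omega>. (rowdot p (x \<omega>) u)\<^sup>2)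
      = (\<lambda>\<omega>. \<Sum>i<p. \<Sum>j<p. u i * (x \<omega> i * x \<omega> j) * u j)"
    by (auto simp: rowdot_def power2_eq_square sum_product mult_ac)
  have products: "integrable M (\<lambda>\<omega>. u i * (x \<omega> i * x \<omega> j) * u j)" if "i < p" "j < p" for i j
    using assms[OF that] by simp
  have terms: "integrable M (\<lambda>\<omega>. \<Sum>j<p. u i * (x \<omega> i * x \<omega> j) * u j)" if "i < p" for i
    using products that by (intro Bochner_Integration.integrable_sum) auto
  show "integrable M (\<lambda>\<omega>. (rowdot p (x \<omega>) u)\<^sup>2)"
    unfolding expand by (intro Bochner_Integration.integrable_sum terms) simp
  show "wsqnorm p (Sigma_x M x) u = (\<integral>\<omega>. (rowdot p (x \<omega>) u)\<^sup>2 \<partial>M)"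
  proof -
    have "(\<integral>\<omega>. (rowdot p (x \<omega>) u)\<^sup>2 \<partial>M)
        = (\<Sum>i<p. \<integral>\<omega>. (\<Sum>j<p. u i * (x \<omega> i * x \<omega> j) * u j) \<partial>M)"
      unfolding expand by (intro Bochner_Integration.integral_sum terms) simp
    also have "\<dots> = (\<Sum>i<p. \<Sum>j<p. \<integral>\<omega>. u i * (x \<omega> i * x \<omega> j) * u j \<partial>M)"
      by (intro sum.cong refl Bochner_Integration.integral_sum products) simp_all
    finally show ?thesis by (simp add: wsqnorm_def Sigma_x_def)
  qed
qed

lemma INF_bounds_of_comparable:
  fixes f g :: "'b \<Rightarrow> real"
  assumes "s\<^sub>0 \<in> S" and minimal: "\<And>s. s \<in> S \<Longrightarrow> f s\<^sub>0 \<le> f s"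
    and "a \<ge> 0" and comparable: "\<And>s. s \<in> S \<Longrightarrow> a * f s \<le> g s \<and> g s \<le> b * f s"
  shows "a * f s\<^sub>0 \<le> (INF s\<in>S. g s) \<and> (INF s\<in>S. g s) \<le> b * f s\<^sub>0"
proof
  have lower: "a * f s\<^sub>0 \<le> g s" if "s \<in> S" for s
    using mult_left_mono[OF minimal[OF that] \<open>a \<ge> 0\<close>] comparable[OF that] by linarith
  then show "a * f s\<^sub>0 \<le> (INF s\<in>S. g s)"
    using \<open>s\<^sub>0 \<in> S\<close> by (intro cINF_greatest) auto
  have "(INF s\<in>S. g s) \<le> g s\<^sub>0"
    using lower \<open>s\<^sub>0 \<in> S\<close> by (intro cINF_lower bdd_belowI2) auto
  then show "(INF s\<in>S. g s) \<le> b * f s\<^sub>0"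
    using comparable[OF \<open>s\<^sub>0 \<in> S\<close>] by linarith
qed

lemma rowdot_diff: "rowdot p X (\<lambda>i. u i - v i) = rowdot p X u - rowdot p X v"
  by (simp add: rowdot_def right_diff_distrib sum_subtractf)

lemma rowdot_measurable_gen_sigma:
  "(\<lambda>\<omega>. rowdot p (x \<omega>) u) \<in> borel_measurable (gen_sigma M p x)"
proof -
  have "(\<lambda>\<omega>. restrict (x \<omega>) {..<p}) \<in> gen_sigma M p x \<rightarrow>\<^sub>M PiM {..<p} (\<lambda>_. borel)"
    unfolding gen_sigma_def by (rule measurable_vimage_algebra1) (auto simp: space_PiM)
  moreover have "(\<lambda>f. \<Sum>i<p. f i * u i) \<in> borel_measurable (PiM {..<p} (\<lambda>_. borel))"
    by measurable
  ultimately have "(\<lambda>\<omega>. \<Sum>i<p. restrict (x \<omega>) {..<p} i * u i) \<in> borel_measurable (gen_sigma M p x)"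
    by (rule measurable_compose)
  then show ?thesis by (simp add: rowdot_def)
qed

lemma sigma_finite_subalgebra_gen_sigma:
  assumes "finite_measure M" and "\<And>i. i < p \<Longrightarrow> (\<lambda>\<omega>. x \<omega> i) \<in> borel_measurable M"
  shows "sigma_finite_subalgebra M (gen_sigma M p x)"
proof (rule finite_measure_subalgebra_is_sigma_finite)
  have "(\<lambda>\<omega>. restrict (x \<omega>) {..<p}) \<in> M \<rightarrow>\<^sub>M PiM {..<p} (\<lambda>_. borel)"
    using assms(2) by (intro measurable_restrict) auto
  then have "subalgebra M (gen_sigma M p x)"
    unfolding subalgebra_def gen_sigma_def using sets_image_in_sets[OF refl] by simp
  then show "finite_measure_subalgebra M (gen_sigma M p x)"
    using assms(1)
    by (simp add: finite_measure_subalgebra_def finite_measure_subalgebra_axioms_def)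
qed

lemma (in sigma_finite_subalgebra) nn_integral_le_of_nn_cond_exp_le:
  assumes "f \<in> borel_measurable M" and "AE \<omega> in M. nn_cond_exp M F f \<omega> \<le> c"
  shows "(\<integral>\<^sup>+\<omega>. f \<omega> \<partial>M) \<le> c * emeasure M (space M)"
proof -
  have "(\<integral>\<^sup>+\<omega>. f \<omega> \<partial>M) = (\<integral>\<^sup>+\<omega>. 1 * nn_cond_exp M F f \<omega> \<partial>M)"
    using nn_cond_exp_intg[of "\<lambda>_. 1" f] assms(1) by simp
  also have "\<dots> \<le> (\<integral>\<^sup>+\<omega>. c \<partial>M)"
    using assms(2) by (intro nn_integral_mono_AE) auto
  finally show ?thesis by simp
qed

lemma (in sigma_finite_subalgebra) integral_mult_eq_0_of_real_cond_exp_eq_0: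
  assumes "integrable M (\<lambda>\<omega>. g \<omega> * f \<omega>)" "g \<in> borel_measurable F" "f \<in> borel_measurable M"
    and "AE \<omega> in M. real_cond_exp M F f \<omega> = 0"
  shows "(\<integral>\<omega>. g \<omega> * f \<omega> \<partial>M) = 0"
proof -
  have "(\<integral>\<omega>. g \<omega> * f \<omega> \<partial>M) = (\<integral>\<omega>. g \<omega> * real_cond_exp M F f \<omega> \<partial>M)"
    using real_cond_exp_intg(2)[OF assms(1-3)] by simp
  also have "\<dots> = 0"
    using assms(4) by (intro integral_eq_zero_AE) auto
  finally show ?thesis .
qed

locale linear_model = prob_space M for M :: "'a measure" +
  fixes p :: nat and x :: "'a \<Rightarrow> nat \<Rightarrow> real" and \<epsilon> :: "'a \<Rightarrow> real" and d B :: real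
  assumes d_gt_2: "d > 2" and B_pos: "B > 0"
    and x_measurable: "\<And>i. i < p \<Longrightarrow> (\<lambda>\<omega>. x \<omega> i) \<in> borel_measurable M"
    and noise_measurable[measurable]: "\<epsilon> \<in> borel_measurable M"
    and noise_cond_mean: "AE \<omega> in M. real_cond_exp M (gen_sigma M p x) \<epsilon> \<omega> = 0"
    and noise_cond_moment:
      "AE \<omega> in M. nn_cond_exp M (gen_sigma M p x) (\<lambda>\<omega>. ennreal (\<bar>\<epsilon> \<omega>\<bar> powr d)) \<omega> \<le> ennreal B"
    and design_moment:
      "\<And>\<tau>. \<tau> \<in> sphere_p p \<Longrightarrow> (\<integral>\<^sup>+\<omega>. ennreal (\<bar>rowdot p (x \<omega>) \<tau>\<bar> powr d) \<partial>M) \<le> ennreal B"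
    and design_second_moment_lower:
      "\<And>\<tau>. \<tau> \<in> sphere_p p \<Longrightarrow> ennreal (1 / B) \<le> (\<integral>\<^sup>+\<omega>. ennreal ((rowdot p (x \<omega>) \<tau>)\<^sup>2) \<partial>M)"
begin

sublocale design: sigma_finite_subalgebra M "gen_sigma M p x"
  using sigma_finite_subalgebra_gen_sigma[OF finite_measure_axioms x_measurable] .

lemma rowdot_x_measurable[measurable]: "(\<lambda>\<omega>. rowdot p (x \<omega>) u) \<in> borel_measurable M"
  using x_measurable by (rule rowdot_measurable)

lemma integrable_coordinate_square:
  assumes "i < p"
  shows "integrable M (\<lambda>\<omega>. (x \<omega> i)\<^sup>2)"
proof (rule integrable_square_of_moment)
  show "(\<integral>\<^sup>+\<omega>. ennreal (\<bar>x \<omega> i\<bar> powr d) \<partial>M) \<le> ennreal B"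
    using design_moment[OF unit_vector_in_sphere_p[OF assms]] by (simp add: rowdot_unit_vector assms)
qed (use assms x_measurable d_gt_2 B_pos in auto)

lemma integrable_coordinate_product:
  "i < p \<Longrightarrow> j < p \<Longrightarrow> integrable M (\<lambda>\<omega>. x \<omega> i * x \<omega> j)"
  by (intro integrable_mult_of_square_integrable integrable_coordinate_square x_measurable)

lemma integrable_rowdot_square: "integrable M (\<lambda>\<omega>. (rowdot p (x \<omega>) u)\<^sup>2)"
  using integrable_coordinate_product by (rule wsqnorm_Sigma_x_eq_integral)

lemma wsqnorm_Sigma_x: "wsqnorm p (Sigma_x M x) u = (\<integral>\<omega>. (rowdot p (x \<omega>) u)\<^sup>2 \<partial>M)"
  using integrable_coordinate_product by (rule wsqnorm_Sigma_x_eq_integral)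

lemma wsqnorm_Sigma_x_bounds_sphere:
  assumes "\<tau> \<in> sphere_p p"
  shows "1 / B \<le> wsqnorm p (Sigma_x M x) \<tau> \<and> wsqnorm p (Sigma_x M x) \<tau> \<le> 1 + B"
proof -
  have eq: "(\<integral>\<^sup>+\<omega>. ennreal ((rowdot p (x \<omega>) \<tau>)\<^sup>2) \<partial>M) = ennreal (wsqnorm p (Sigma_x M x) \<tau>)"
    unfolding wsqnorm_Sigma_x using integrable_rowdot_square by (intro nn_integral_eq_integral) auto
  then have "ennreal (1 / B) \<le> ennreal (wsqnorm p (Sigma_x M x) \<tau>)"
    using design_second_moment_lower[OF assms] by simp
  moreover have "ennreal (wsqnorm p (Sigma_x M x) \<tau>) \<le> ennreal (1 + B)"
    using nn_integral_square_le_of_moment[OF _ _ _ design_moment[OF assms]] d_gt_2 B_pos eq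
    by simp
  ultimately show ?thesis
    using B_pos by (simp add: ennreal_le_iff2 ennreal_le_iff del: ennreal_plus)
qed

lemma wsqnorm_Sigma_x_bounds:
  "1 / B * sqnorm p u \<le> wsqnorm p (Sigma_x M x) u \<and> wsqnorm p (Sigma_x M x) u \<le> (1 + B) * sqnorm p u"
  using B_pos wsqnorm_Sigma_x_bounds_sphere by (intro wsqnorm_bounds_of_sphere) auto

lemma integrable_noise_square: "integrable M (\<lambda>\<omega>. (\<epsilon> \<omega>)\<^sup>2)"
proof (rule integrable_square_of_moment)
  show "(\<integral>\<^sup>+\<omega>. ennreal (\<bar>\<epsilon> \<omega>\<bar> powr d) \<partial>M) \<le> ennreal B"
    using design.nn_integral_le_of_nn_cond_exp_le[OF _ noise_cond_moment] by (simp add: emeasure_space_1)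
qed (use d_gt_2 B_pos in auto)

lemma design_noise_orthogonal: "(\<integral>\<omega>. rowdot p (x \<omega>) u * \<epsilon> \<omega> \<partial>M) = 0"
  using integrable_rowdot_square integrable_noise_square rowdot_measurable_gen_sigma noise_cond_mean
  by (intro design.integral_mult_eq_0_of_real_cond_exp_eq_0 integrable_mult_of_square_integrable) auto

lemma Qo_eq:
  "Qo M p x \<epsilon> \<beta> v
     = (wsqnorm p (Sigma_x M x) (\<lambda>i. v i - \<beta> i) + (\<integral>\<omega>. (\<epsilon> \<omega>)\<^sup>2 \<partial>M)) / real p"
proof -
  define r where "r \<omega> = rowdot p (x \<omega>) (\<lambda>i. v i - \<beta> i)" for \<omega>
  have "(rowdot p (x \<omega>) \<beta> + \<epsilon> \<omega> - rowdot p (x \<omega>) v)\<^sup>2 = (r \<omega>)\<^sup>2 - 2 * (r \<omega> * \<epsilon> \<omega>) + (\<epsilon> \<omega>)\<^sup>2"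
    for \<omega> by (simp add: r_def rowdot_diff power2_eq_square algebra_simps)
  moreover have "integrable M (\<lambda>\<omega>. r \<omega> * \<epsilon> \<omega>)"
    unfolding r_def using integrable_rowdot_square integrable_noise_square
    by (rule integrable_mult_of_square_integrable) auto
  ultimately have "(\<integral>\<omega>. (rowdot p (x \<omega>) \<beta> + \<epsilon> \<omega> - rowdot p (x \<omega>) v)\<^sup>2 \<partial>M)
      = (\<integral>\<omega>. (r \<omega>)\<^sup>2 \<partial>M) - 2 * (\<integral>\<omega>. r \<omega> * \<epsilon> \<omega> \<partial>M) + (\<integral>\<omega>. (\<epsilon> \<omega>)\<^sup>2 \<partial>M)"
    using integrable_rowdot_square integrable_noise_square by (simp add: r_def)
  then show ?thesis
    unfolding Qo_def r_def design_noise_orthogonal wsqnorm_Sigma_x by simp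
qed

lemma Qo_le_iff:
  assumes "0 < p"
  shows "Qo M p x \<epsilon> \<beta> v \<le> Qo M p x \<epsilon> \<beta> w
     \<longleftrightarrow> wsqnorm p (Sigma_x M x) (\<lambda>i. v i - \<beta> i) \<le> wsqnorm p (Sigma_x M x) (\<lambda>i. w i - \<beta> i)"
  using assms by (simp add: Qo_eq divide_le_cancel)

lemma Qo_minimiser_is_weighted_minimiser:
  assumes "0 < p"
  shows "\<forall>m1\<in>\<M>. \<forall>\<delta>1\<in>\<Delta>.
    (\<forall>m\<in>\<M>. \<forall>\<delta>\<in>\<Delta>. Qo M p x \<epsilon> \<beta> (mvec k m1 \<delta>1) \<le> Qo M p x \<epsilon> \<beta> (mvec k m \<delta>))
    \<longrightarrow> (\<forall>m\<in>\<M>. \<forall>\<delta>\<in>\<Delta>. wsqnorm p (Sigma_x M x) (\<lambda>i. mvec k m1 \<delta>1 i - \<beta> i)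
                           \<le> wsqnorm p (Sigma_x M x) (\<lambda>i. mvec k m \<delta> i - \<beta> i))"
  using Qo_le_iff[OF assms] by blast

lemma bias_comparable_to_weighted_INF:
  assumes "mo \<in> \<M>" "\<delta>o \<in> \<Delta>"
    and minimal: "\<forall>m\<in>\<M>. \<forall>\<delta>\<in>\<Delta>.
      sqnorm p (\<lambda>i. mvec k mo \<delta>o i - \<beta> i) \<le> sqnorm p (\<lambda>i. mvec k m \<delta> i - \<beta> i)"
  shows "let b = (\<lambda>i. \<beta> i - mvec k mo \<delta>o i);
             W = (INF m\<delta>\<in>\<M> \<times> \<Delta>. wsqnorm p (Sigma_x M x) (\<lambda>i. mvec k (fst m\<delta>) (snd m\<delta>) i - \<beta> i))
         in sqnorm p b \<le> (1 + B) * W \<and> W \<le> (1 + B) * sqnorm p b"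
proof -
  define f where "f m\<delta> = sqnorm p (\<lambda>i. mvec k (fst m\<delta>) (snd m\<delta>) i - \<beta> i)" for m\<delta>
  define W where "W = (INF m\<delta>\<in>\<M> \<times> \<Delta>. wsqnorm p (Sigma_x M x) (\<lambda>i. mvec k (fst m\<delta>) (snd m\<delta>) i - \<beta> i))"
  have bounds: "1 / B * f (mo, \<delta>o) \<le> W \<and> W \<le> (1 + B) * f (mo, \<delta>o)"
    unfolding W_def f_def using assms B_pos wsqnorm_Sigma_x_bounds
    by (intro INF_bounds_of_comparable) auto
  moreover have "0 \<le> 1 / B * f (mo, \<delta>o)"
    using B_pos by (simp add: f_def sqnorm_nonneg)
  ultimately have "0 \<le> W" by linarith
  moreover have "f (mo, \<delta>o) \<le> B * W"
    using bounds B_pos by (simp add: field_simps)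
  ultimately have "f (mo, \<delta>o) \<le> (1 + B) * W \<and> W \<le> (1 + B) * f (mo, \<delta>o)"
    using bounds by (simp add: distrib_right)
  then show ?thesis
    unfolding Let_def W_def[symmetric] by (simp add: f_def sqnorm_minus_commute)
qed

end

theorem proposition2:
  fixes B d Mlo Mhi :: real
  assumes "B > 0" and "d > 2" and "Mlo > 0"
  shows "\<exists>c>0. \<forall>(M::'a measure) (p::nat) (k::nat) (x::'a \<Rightarrow> nat \<Rightarrow> real) (\<epsilon>::'a \<Rightarrow> real)
            (\<beta>::nat \<Rightarrow> real) (\<Delta>::(nat \<Rightarrow> real) set) mo \<delta>o.
    ( prob_space M
    \<and> 1 \<le> k \<and> k \<le> p
    \<and> (\<forall>i<p. (\<lambda>\<omega>. x \<omega> i) \<in> borel_measurable M)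
    \<and> \<epsilon> \<in> borel_measurable M
    \<and> (\<forall>i<p. integrable M (\<lambda>\<omega>. x \<omega> i) \<and> (\<integral>\<omega>. x \<omega> i \<partial>M) = 0)
    \<and> integrable M \<epsilon>
    \<and> (AE \<omega> in M. real_cond_exp M (gen_sigma M p x) \<epsilon> \<omega> = 0)
    \<and> (AE \<omega> in M. nn_cond_exp M (gen_sigma M p x) (\<lambda>\<omega>. ennreal (\<bar>\<epsilon> \<omega>\<bar> powr d)) \<omega> \<le> ennreal B)
    \<and> (\<forall>\<tau>\<in>sphere_p p.
          (\<integral>\<^sup>+\<omega>. ennreal (\<bar>rowdot p (x \<omega>) \<tau>\<bar> powr d) \<partial>M) \<le> ennreal B
        \<and> ennreal (1 / B) \<le> (\<integral>\<^sup>+\<omega>. ennreal ((rowdot p (x \<omega>) \<tau>)\<^sup>2) \<partial>M))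
    \<and> mo \<in> Mset p k Mlo Mhi \<and> \<delta>o \<in> \<Delta>
    \<and> (\<forall>m\<in>Mset p k Mlo Mhi. \<forall>\<delta>\<in>\<Delta>.
          sqnorm p (\<lambda>i. mvec k mo \<delta>o i - \<beta> i) \<le> sqnorm p (\<lambda>i. mvec k m \<delta> i - \<beta> i)) )
    \<longrightarrow>
    ( (\<forall>m1\<in>Mset p k Mlo Mhi. \<forall>\<delta>1\<in>\<Delta>.
         (\<forall>m\<in>Mset p k Mlo Mhi. \<forall>\<delta>\<in>\<Delta>. Qo M p x \<epsilon> \<beta> (mvec k m1 \<delta>1) \<le> Qo M p x \<epsilon> \<beta> (mvec k m \<delta>))
         \<longrightarrow> (\<forall>m\<in>Mset p k Mlo Mhi. \<forall>\<delta>\<in>\<Delta>.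
                wsqnorm p (Sigma_x M x) (\<lambda>i. mvec k m1 \<delta>1 i - \<beta> i)
                  \<le> wsqnorm p (Sigma_x M x) (\<lambda>i. mvec k m \<delta> i - \<beta> i)))
    \<and> (let b = (\<lambda>i. \<beta> i - mvec k mo \<delta>o i);
           W = (INF m\<delta>\<in>Mset p k Mlo Mhi \<times> \<Delta>.
                  wsqnorm p (Sigma_x M x) (\<lambda>i. mvec k (fst m\<delta>) (snd m\<delta>) i - \<beta> i))
       in sqnorm p b \<le> c * W \<and> W \<le> c * sqnorm p b) )"
proof (intro exI[of _ "1 + B"] conjI allI impI, goal_cases)
  case 1
  show ?case using assms(1) by simp
next
  case (2 M p k x \<epsilon> \<beta> \<Delta> mo \<delta>o)
  then interpret linear_model M p x \<epsilon> d B
    using assms by (intro linear_model.intro linear_model_axioms.intro) auto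
  show ?case using 2 by (intro Qo_minimiser_is_weighted_minimiser) auto
next
  case (3 M p k x \<epsilon> \<beta> \<Delta> mo \<delta>o)
  then interpret linear_model M p x \<epsilon> d B
    using assms by (intro linear_model.intro linear_model_axioms.intro) auto
  show ?case using 3 by (intro bias_comparable_to_weighted_INF) auto
qed

end
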